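(* Consider the optimization problem (P) defined in the context. There exists an optimal solution $(\boldsymbol\tau,\boldsymbol\varphi,\mathbf e)$ of (P) in which the source node uses all of its harvested energy, i.e. $e_1=\zeta P_t h_1\tau_0$.
   Context: Parameters: integer $K\ge1$, $T>0$, $W>0$, $\zeta\in(0,1]$, $P_t>0$, $I_p>0$, and for $k=1,\dots,K$: $h_k>0$, $f_k>0$, $\gamma_k>0$, $B_k^b>0$. Variables: $\boldsymbol\tau=(\tau_0,\tau_1,\dots,\tau_K)$, $\boldsymbol\varphi=(\varphi_1,\dots,\varphi_K)$, $\mathbf e=(e_1,\dots,e_K)$. Rate of node $k$: $R_k(\tau_k,\varphi_k,e_k)=\varphi_k W\log_2(1+\frac{e_k}{\varphi_k}\gamma_k)+(\tau_k-\varphi_k)B_k^b$ if $\varphi_k>0$, and $R_k=\tau_kB_k^b$ if $\varphi_k=0$. Problem (P): maximize $R(\boldsymbol\tau,\boldsymbol\varphi,\mathbf e)=\min_{1\le k\le K}R_k(\tau_k,\varphi_k,e_k)$ subject to: $\sum_{k=0}^K\tau_k\le T$; $0\le\tau_0$; $0\le\varphi_k\le\tau_k\le T$ for $k=1,\dots,K$; $0\le e_k\le \zeta P_t h_k\sum_{i=0}^{k-1}\tau_i$ for $k=1,\dots,K$ (harvested-energy constraint); $e_k\le \frac{I_p}{f_k}\varphi_k$ for $k=1,\dots,K$ (interference constraint). *)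

theory Defs
  imports Complex_Main
begin

definition node_rate :: "real \<Rightarrow> real \<Rightarrow> real \<Rightarrow> real \<Rightarrow> real \<Rightarrow> real \<Rightarrow> real" where
  "node_rate W \<gamma> Bb \<tau>k \<phi>k ek =
     (if \<phi>k > 0 then \<phi>k * W * log 2 (1 + (ek / \<phi>k) * \<gamma>) + (\<tau>k - \<phi>k) * Bb
      else \<tau>k * Bb)"

definition objR :: "nat \<Rightarrow> real \<Rightarrow> (nat \<Rightarrow> real) \<Rightarrow> (nat \<Rightarrow> real)
     \<Rightarrow> (nat \<Rightarrow> real) \<Rightarrow> (nat \<Rightarrow> real) \<Rightarrow> (nat \<Rightarrow> real) \<Rightarrow> real" where
  "objR K W \<gamma> Bb \<tau> \<phi> e = Min ((\<lambda>k. node_rate W (\<gamma> k) (Bb k) (\<tau> k) (\<phi> k) (e k)) ` {1..K})"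

text \<open>Feasible set of problem (P); tau indexed by 0..K, phi and e by 1..K.\<close>
definition feasibleP :: "nat \<Rightarrow> real \<Rightarrow> real \<Rightarrow> real \<Rightarrow> real \<Rightarrow> (nat \<Rightarrow> real) \<Rightarrow> (nat \<Rightarrow> real)
     \<Rightarrow> (nat \<Rightarrow> real) \<Rightarrow> (nat \<Rightarrow> real) \<Rightarrow> (nat \<Rightarrow> real) \<Rightarrow> bool" where
  "feasibleP K T \<zeta> Pt Ip h f \<tau> \<phi> e \<longleftrightarrow>
     (\<Sum>k=0..K. \<tau> k) \<le> T \<and> 0 \<le> \<tau> 0 \<and>
     (\<forall>k\<in>{1..K}. 0 \<le> \<phi> k \<and> \<phi> k \<le> \<tau> k \<and> \<tau> k \<le> T \<and>
        0 \<le> e k \<and> e k \<le> \<zeta> * Pt * h k * (\<Sum>i=0..k-1. \<tau> i) \<and>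
        e k \<le> (Ip / f k) * \<phi> k)"

end

theory Submission
  imports Defs "HOL-Analysis.Analysis"
begin

text \<open>An optimum exists because the feasible set is compact in the finitely many coordinates the
  problem uses and the objective is upper semicontinuous on it. Given an optimum, shrink \<open>\<tau> 0\<close>
  to the time \<open>e 1 / (\<zeta> * Pt * h 1)\<close> that node 1 needs to harvest \<open>e 1\<close> and give the rest to
  \<open>\<tau> 1\<close>: the partial sums \<open>\<tau> 0 + \<dots> + \<tau> m\<close> with \<open>m \<ge> 1\<close> do not change, so neither
  does any later energy budget, and the rate of node 1 can only grow.\<close>

lemma bounded_coordinates_imp_convergent_subseq:
  fixes f :: "nat \<Rightarrow> 'i \<Rightarrow> 'a::heine_borel"
  assumes "finite I" and "\<And>i. i \<in> I \<Longrightarrow> bounded (range (\<lambda>n. f n i))"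
  shows "\<exists>r l. strict_mono r \<and> (\<forall>i\<in>I. (\<lambda>n. f (r n) i) \<longlonglongrightarrow> l i)"
  using assms
proof (induction I rule: finite_induct)
  case empty
  show ?case by (rule exI[of _ id]) (auto simp: strict_mono_def)
next
  case (insert j I)
  then obtain r l where r: "strict_mono r" and l: "\<forall>i\<in>I. (\<lambda>n. f (r n) i) \<longlonglongrightarrow> l i"
    by blast
  have "bounded (range (\<lambda>n. f (r n) j))"
    by (rule bounded_subset[OF insert.prems[of j]]) auto
  then obtain l' s where s: "strict_mono s" and l': "((\<lambda>n. f (r n) j) \<circ> s) \<longlonglongrightarrow> l'"
    using bounded_imp_convergent_subsequence by blast
  have "\<forall>i\<in>insert j I. (\<lambda>n. f (r (s n)) i) \<longlonglongrightarrow> (l(j := l')) i"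
  proof
    fix i assume "i \<in> insert j I"
    then consider "i = j" | "i \<in> I" "i \<noteq> j" by blast
    then show "(\<lambda>n. f (r (s n)) i) \<longlonglongrightarrow> (l(j := l')) i"
    proof cases
      case 1 then show ?thesis using l' by (simp add: o_def)
    next
      case 2 then show ?thesis
        using LIMSEQ_subseq_LIMSEQ[OF l[rule_format] s] by (simp add: o_def)
    qed
  qed
  then show ?case using strict_mono_o[OF r s] unfolding o_def by blast
qed

lemma feasibleP_tau_nonneg:
  assumes "feasibleP K T \<zeta> Pt Ip h f \<tau> \<phi> e" and "i \<le> K"
  shows "0 \<le> \<tau> i"
proof (cases "i = 0")
  case True then show ?thesis using assms(1) unfolding feasibleP_def by simp
next
  case False
  then have "0 \<le> \<phi> i" "\<phi> i \<le> \<tau> i" using assms unfolding feasibleP_def by auto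
  then show ?thesis by linarith
qed

lemma feasibleP_partial_sum_le:
  assumes F: "feasibleP K T \<zeta> Pt Ip h f \<tau> \<phi> e" and "m \<le> K"
  shows "(\<Sum>i=0..m. \<tau> i) \<le> T"
proof -
  have "(\<Sum>i=0..m. \<tau> i) \<le> (\<Sum>i=0..K. \<tau> i)"
    using assms by (intro sum_mono2) (auto intro: feasibleP_tau_nonneg[OF F])
  also have "\<dots> \<le> T" using F unfolding feasibleP_def by simp
  finally show ?thesis .
qed

lemma feasibleP_tau_le:
  assumes F: "feasibleP K T \<zeta> Pt Ip h f \<tau> \<phi> e" and "i \<le> K"
  shows "\<tau> i \<le> T"
proof -
  have "\<tau> i \<le> (\<Sum>j=0..i. \<tau> j)"
    using assms by (intro member_le_sum) (auto intro: feasibleP_tau_nonneg[OF F])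
  also have "\<dots> \<le> T" using feasibleP_partial_sum_le[OF assms] .
  finally show ?thesis .
qed

lemma node_rate_le:
  assumes "0 \<le> p" "0 \<le> e" "e \<le> c * p" "W > 0" "\<gamma> > 0" "Bb > 0"
  shows "node_rate W \<gamma> Bb t p e \<le> p * W * log 2 (1 + c * \<gamma>) + t * Bb"
proof (cases "p > 0")
  case True
  have "e / p * \<gamma> \<le> c * \<gamma>"
    using True assms by (intro mult_right_mono) (auto simp: divide_le_eq mult.commute)
  moreover have "0 \<le> e / p * \<gamma>" using assms True by simp
  ultimately have "log 2 (1 + e / p * \<gamma>) \<le> log 2 (1 + c * \<gamma>)" by simp
  then have "p * W * log 2 (1 + e / p * \<gamma>) \<le> p * W * log 2 (1 + c * \<gamma>)"
    using True assms by (simp add: mult_left_mono)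
  moreover have "(t - p) * Bb \<le> t * Bb" using assms True by (simp add: algebra_simps)
  moreover have "node_rate W \<gamma> Bb t p e = p * W * log 2 (1 + e / p * \<gamma>) + (t - p) * Bb"
    using True unfolding node_rate_def by simp
  ultimately show ?thesis by linarith
next
  case False
  then show ?thesis using assms unfolding node_rate_def by simp
qed

lemma node_rate_mono_time:
  assumes "t \<le> t'" "0 \<le> Bb"
  shows "node_rate W \<gamma> Bb t p e \<le> node_rate W \<gamma> Bb t' p e"
  using mult_right_mono[OF assms] mult_right_mono[of "t - p" "t' - p" Bb] assms
  unfolding node_rate_def by auto

text \<open>At \<open>p0 = 0\<close> the interference constraint \<open>e \<le> c * p\<close> squeezes the logarithmic term to \<open>0\<close>
  by \<open>p * W * log 2 (1 + c * \<gamma>)\<close>.\<close>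
lemma node_rate_limit_ge:
  fixes t p e m :: "nat \<Rightarrow> real"
  assumes t: "t \<longlonglongrightarrow> t0" and p: "p \<longlonglongrightarrow> p0" and e: "e \<longlonglongrightarrow> e0"
    and pe: "\<And>n. 0 \<le> p n \<and> 0 \<le> e n \<and> e n \<le> c * p n"
    and W: "W > 0" and \<gamma>: "\<gamma> > 0" and Bb: "Bb > 0"
    and m_le: "\<And>n. m n \<le> node_rate W \<gamma> Bb (t n) (p n) (e n)" and m: "m \<longlonglongrightarrow> M"
  shows "M \<le> node_rate W \<gamma> Bb t0 p0 e0"
proof -
  have p0: "0 \<le> p0" using p pe by (intro LIMSEQ_le_const) auto
  have e0: "0 \<le> e0" using e pe by (intro LIMSEQ_le_const) auto
  show ?thesis
  proof (cases "p0 > 0")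
    case True
    have "0 < 1 + e0 / p0 * \<gamma>" using True e0 \<gamma> by (intro add_pos_nonneg) auto
    then have lim: "(\<lambda>n. p n * W * log 2 (1 + e n / p n * \<gamma>) + (t n - p n) * Bb)
        \<longlonglongrightarrow> node_rate W \<gamma> Bb t0 p0 e0"
      using True unfolding node_rate_def by (auto intro!: tendsto_intros t p e)
    have "eventually (\<lambda>n. m n \<le> p n * W * log 2 (1 + e n / p n * \<gamma>) + (t n - p n) * Bb) sequentially"
      using order_tendstoD(1)[OF p True]
    proof (rule eventually_mono)
      show "m n \<le> p n * W * log 2 (1 + e n / p n * \<gamma>) + (t n - p n) * Bb" if "0 < p n" for n
        using m_le[of n] that unfolding node_rate_def by simp
    qed
    then show ?thesis using tendsto_le[OF trivial_limit_sequentially lim m] by blast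
  next
    case False
    then have "p0 = 0" using p0 by simp
    have lim: "(\<lambda>n. p n * W * log 2 (1 + c * \<gamma>) + t n * Bb) \<longlonglongrightarrow> node_rate W \<gamma> Bb t0 p0 e0"
      using \<open>p0 = 0\<close> unfolding node_rate_def by (auto intro!: tendsto_eq_intros t p)
    have "m n \<le> p n * W * log 2 (1 + c * \<gamma>) + t n * Bb" for n
      using m_le[of n] node_rate_le[OF _ _ _ W \<gamma> Bb] pe[of n] order_trans by blast
    then show ?thesis by (intro tendsto_le[OF trivial_limit_sequentially lim m] always_eventually) blast
  qed
qed

lemma objR_le_node_rate:
  "k \<in> {1..K} \<Longrightarrow> objR K W \<gamma> Bb \<tau> \<phi> e \<le> node_rate W (\<gamma> k) (Bb k) (\<tau> k) (\<phi> k) (e k)"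
  unfolding objR_def by (intro Min_le) auto

lemma objR_ge_iff:
  "K \<ge> 1 \<Longrightarrow> M \<le> objR K W \<gamma> Bb \<tau> \<phi> e \<longleftrightarrow>
     (\<forall>k\<in>{1..K}. M \<le> node_rate W (\<gamma> k) (Bb k) (\<tau> k) (\<phi> k) (e k))"
  unfolding objR_def by (subst Min_ge_iff) auto

lemma feasibleP_limit:
  assumes F: "\<And>n. feasibleP K T \<zeta> Pt Ip h f (ts n) (ps n) (es n)"
    and ts: "\<And>i. i \<le> K \<Longrightarrow> (\<lambda>n. ts n i) \<longlonglongrightarrow> \<tau> i"
    and ps: "\<And>i. i \<le> K \<Longrightarrow> (\<lambda>n. ps n i) \<longlonglongrightarrow> \<phi> i"
    and es: "\<And>i. i \<le> K \<Longrightarrow> (\<lambda>n. es n i) \<longlonglongrightarrow> e i"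
  shows "feasibleP K T \<zeta> Pt Ip h f \<tau> \<phi> e"
  unfolding feasibleP_def
proof (intro conjI ballI)
  have sums: "(\<lambda>n. \<Sum>i=0..m. ts n i) \<longlonglongrightarrow> (\<Sum>i=0..m. \<tau> i)" if "m \<le> K" for m
    using ts that by (intro tendsto_sum) auto
  show "(\<Sum>k=0..K. \<tau> k) \<le> T"
    using F unfolding feasibleP_def by (intro LIMSEQ_le_const2[OF sums]) auto
  show "0 \<le> \<tau> 0"
    using F unfolding feasibleP_def by (intro LIMSEQ_le_const[OF ts]) auto
  fix k assume k: "k \<in> {1..K}"
  then have Fk: "0 \<le> ps n k \<and> ps n k \<le> ts n k \<and> ts n k \<le> T \<and>
      0 \<le> es n k \<and> es n k \<le> \<zeta> * Pt * h k * (\<Sum>i=0..k-1. ts n i) \<and>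
      es n k \<le> (Ip / f k) * ps n k" for n
    using F[of n] unfolding feasibleP_def by blast
  have t: "(\<lambda>n. ts n k) \<longlonglongrightarrow> \<tau> k" and p: "(\<lambda>n. ps n k) \<longlonglongrightarrow> \<phi> k"
    and e: "(\<lambda>n. es n k) \<longlonglongrightarrow> e k" using ts ps es k by auto
  have energy: "(\<lambda>n. \<zeta> * Pt * h k * (\<Sum>i=0..k-1. ts n i)) \<longlonglongrightarrow> \<zeta> * Pt * h k * (\<Sum>i=0..k-1. \<tau> i)"
    using k by (intro tendsto_mult_left sums) auto
  have interference: "(\<lambda>n. (Ip / f k) * ps n k) \<longlonglongrightarrow> (Ip / f k) * \<phi> k"
    by (intro tendsto_mult_left p)
  show "0 \<le> \<phi> k" using Fk by (intro LIMSEQ_le_const[OF p]) auto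
  show "\<phi> k \<le> \<tau> k" using Fk by (intro LIMSEQ_le[OF p t]) auto
  show "\<tau> k \<le> T" using Fk by (intro LIMSEQ_le_const2[OF t]) auto
  show "0 \<le> e k" using Fk by (intro LIMSEQ_le_const[OF e]) auto
  show "e k \<le> \<zeta> * Pt * h k * (\<Sum>i=0..k-1. \<tau> i)" using Fk by (intro LIMSEQ_le[OF e energy]) auto
  show "e k \<le> (Ip / f k) * \<phi> k" using Fk by (intro LIMSEQ_le[OF e interference]) auto
qed

lemma objR_limit_ge:
  assumes K: "K \<ge> 1" and W: "W > 0" and pos: "\<forall>k\<in>{1..K}. \<gamma> k > 0 \<and> Bb k > 0"
    and F: "\<And>n. feasibleP K T \<zeta> Pt Ip h f (ts n) (ps n) (es n)"
    and ts: "\<And>i. i \<le> K \<Longrightarrow> (\<lambda>n. ts n i) \<longlonglongrightarrow> \<tau> i"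
    and ps: "\<And>i. i \<le> K \<Longrightarrow> (\<lambda>n. ps n i) \<longlonglongrightarrow> \<phi> i"
    and es: "\<And>i. i \<le> K \<Longrightarrow> (\<lambda>n. es n i) \<longlonglongrightarrow> e i"
    and m_le: "\<And>n. m n \<le> objR K W \<gamma> Bb (ts n) (ps n) (es n)" and m: "m \<longlonglongrightarrow> M"
  shows "M \<le> objR K W \<gamma> Bb \<tau> \<phi> e"
  unfolding objR_ge_iff[OF K]
proof
  fix k assume k: "k \<in> {1..K}"
  show "M \<le> node_rate W (\<gamma> k) (Bb k) (\<tau> k) (\<phi> k) (e k)"
  proof (rule node_rate_limit_ge[OF ts ps es _ W _ _ _ m])
    show "0 \<le> ps n k \<and> 0 \<le> es n k \<and> es n k \<le> Ip / f k * ps n k" for n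
      using F[of n] k unfolding feasibleP_def by auto
    show "m n \<le> node_rate W (\<gamma> k) (Bb k) (ts n k) (ps n k) (es n k)" for n
      using m_le[of n] objR_le_node_rate[OF k] order_trans by blast
  qed (use k pos in auto)
qed

lemma objR_bdd_above:
  assumes K: "K \<ge> 1" and W: "W > 0" and Ip: "Ip > 0"
    and pos: "\<forall>k\<in>{1..K}. f k > 0 \<and> \<gamma> k > 0 \<and> Bb k > 0"
  shows "bdd_above {objR K W \<gamma> Bb \<tau> \<phi> e | \<tau> \<phi> e. feasibleP K T \<zeta> Pt Ip h f \<tau> \<phi> e}"
proof (rule bdd_aboveI, safe)
  define L where "L = log 2 (1 + Ip / f 1 * \<gamma> 1)"
  have one: "(1::nat) \<in> {1..K}" using K by simp
  then have pos1: "f 1 > 0" "\<gamma> 1 > 0" "Bb 1 > 0" using pos by auto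
  then have "0 \<le> Ip / f 1 * \<gamma> 1" using Ip by simp
  then have L: "0 \<le> L" unfolding L_def by simp
  fix \<tau> \<phi> e assume F: "feasibleP K T \<zeta> Pt Ip h f \<tau> \<phi> e"
  then have F1: "0 \<le> \<phi> 1 \<and> \<phi> 1 \<le> \<tau> 1 \<and> \<tau> 1 \<le> T \<and> 0 \<le> e 1 \<and> e 1 \<le> (Ip / f 1) * \<phi> 1"
    using one unfolding feasibleP_def by blast
  have "objR K W \<gamma> Bb \<tau> \<phi> e \<le> node_rate W (\<gamma> 1) (Bb 1) (\<tau> 1) (\<phi> 1) (e 1)"
    by (rule objR_le_node_rate[OF one])
  also have "\<dots> \<le> \<phi> 1 * W * L + \<tau> 1 * Bb 1"
    unfolding L_def using F1 pos1 W by (intro node_rate_le) auto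
  also have "\<dots> \<le> T * W * L + T * Bb 1"
    using F1 W L pos1 by (intro add_mono mult_right_mono) auto
  finally show "objR K W \<gamma> Bb \<tau> \<phi> e \<le> T * W * L + T * Bb 1" .
qed

lemma feasibleP_reset_unused [simp]:
  "feasibleP K T \<zeta> Pt Ip h f \<tau> (\<phi>(0 := a)) (e(0 := b)) = feasibleP K T \<zeta> Pt Ip h f \<tau> \<phi> e"
  unfolding feasibleP_def by (intro conj_cong ball_cong) auto

lemma objR_reset_unused [simp]:
  "objR K W \<gamma> Bb \<tau> (\<phi>(0 := a)) (e(0 := b)) = objR K W \<gamma> Bb \<tau> \<phi> e"
  unfolding objR_def by (intro arg_cong[where f = Min] image_cong) auto

lemma feasibleP_coordinates_bounded:
  assumes F: "feasibleP K T \<zeta> Pt Ip h f \<tau> \<phi> e" and Ip: "Ip > 0"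
    and f: "\<forall>k\<in>{1..K}. f k > 0" and unused: "\<phi> 0 = 0" "e 0 = 0" and i: "i \<le> K"
  shows "(\<tau> i, \<phi> i, e i) \<in> {0..T} \<times> {0..T} \<times> {0..Ip / \<bar>f i\<bar> * T}"
proof -
  have \<tau>: "0 \<le> \<tau> i" "\<tau> i \<le> T" using feasibleP_tau_nonneg[OF F i] feasibleP_tau_le[OF F i] .
  then have "0 \<le> Ip / \<bar>f i\<bar> * T" using Ip by simp
  moreover have "0 \<le> \<phi> i \<and> \<phi> i \<le> \<tau> i \<and> 0 \<le> e i \<and> e i \<le> Ip / \<bar>f i\<bar> * \<phi> i" if "i \<noteq> 0"
  proof -
    from that i have k: "i \<in> {1..K}" by simp
    then have "\<bar>f i\<bar> = f i" using f by (simp add: less_imp_le)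
    with k F show ?thesis unfolding feasibleP_def by auto
  qed
  moreover have "Ip / \<bar>f i\<bar> * \<phi> i \<le> Ip / \<bar>f i\<bar> * T" if "\<phi> i \<le> T"
    using that Ip by (intro mult_left_mono) auto
  ultimately show ?thesis using \<tau> unused by (cases "i = 0") auto
qed

lemma feasibleP_convergent_subseq:
  fixes ts ps es :: "nat \<Rightarrow> nat \<Rightarrow> real"
  assumes F: "\<And>n. feasibleP K T \<zeta> Pt Ip h f (ts n) (ps n) (es n)" and Ip: "Ip > 0"
    and f: "\<forall>k\<in>{1..K}. f k > 0" and unused: "\<And>n. ps n 0 = 0 \<and> es n 0 = 0"
  obtains r \<tau> \<phi> e where "strict_mono r"
    and "\<And>i. i \<le> K \<Longrightarrow> (\<lambda>n. ts (r n) i) \<longlonglongrightarrow> \<tau> i"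
    and "\<And>i. i \<le> K \<Longrightarrow> (\<lambda>n. ps (r n) i) \<longlonglongrightarrow> \<phi> i"
    and "\<And>i. i \<le> K \<Longrightarrow> (\<lambda>n. es (r n) i) \<longlonglongrightarrow> e i"
proof -
  have "bounded (range (\<lambda>n. (ts n i, ps n i, es n i)))" if "i \<in> {0..K}" for i
  proof (rule bounded_subset)
    show "range (\<lambda>n. (ts n i, ps n i, es n i)) \<subseteq> {0..T} \<times> {0..T} \<times> {0..Ip / \<bar>f i\<bar> * T}"
      using feasibleP_coordinates_bounded[OF F Ip f] unused that by auto
  qed (intro bounded_Times bounded_closed_interval)
  then obtain r l where r: "strict_mono r"
    and l: "\<forall>i\<in>{0..K}. (\<lambda>n. (ts (r n) i, ps (r n) i, es (r n) i)) \<longlonglongrightarrow> l i"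
    using bounded_coordinates_imp_convergent_subseq[of "{0..K}" "\<lambda>n i. (ts n i, ps n i, es n i)"]
    by blast
  show thesis
  proof (rule that[OF r])
    fix i assume "i \<le> K"
    then have lim: "(\<lambda>n. (ts (r n) i, ps (r n) i, es (r n) i)) \<longlonglongrightarrow> l i" using l by simp
    show "(\<lambda>n. ts (r n) i) \<longlonglongrightarrow> fst (l i)" using tendsto_fst[OF lim] by simp
    show "(\<lambda>n. ps (r n) i) \<longlonglongrightarrow> fst (snd (l i))" using tendsto_fst[OF tendsto_snd[OF lim]] by simp
    show "(\<lambda>n. es (r n) i) \<longlonglongrightarrow> snd (snd (l i))" using tendsto_snd[OF tendsto_snd[OF lim]] by simp
  qed
qed

lemma feasibleP_attains_max:
  assumes K: "K \<ge> 1" and T: "T > 0" and W: "W > 0" and Ip: "Ip > 0"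
    and pos: "\<forall>k\<in>{1..K}. f k > 0 \<and> \<gamma> k > 0 \<and> Bb k > 0"
  obtains \<tau> \<phi> e where "feasibleP K T \<zeta> Pt Ip h f \<tau> \<phi> e"
    and "\<And>\<tau>' \<phi>' e'. feasibleP K T \<zeta> Pt Ip h f \<tau>' \<phi>' e' \<Longrightarrow>
           objR K W \<gamma> Bb \<tau>' \<phi>' e' \<le> objR K W \<gamma> Bb \<tau> \<phi> e"
proof -
  let ?F = "feasibleP K T \<zeta> Pt Ip h f" and ?O = "objR K W \<gamma> Bb"
  define V where "V = {?O \<tau> \<phi> e | \<tau> \<phi> e. ?F \<tau> \<phi> e}"
  have "?F (\<lambda>_. 0) (\<lambda>_. 0) (\<lambda>_. 0)" using T unfolding feasibleP_def by simp
  then have "V \<noteq> {}" unfolding V_def by blast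
  moreover have bdd: "bdd_above V" unfolding V_def using objR_bdd_above[OF K W Ip pos] .
  ultimately have "Sup V \<in> closure V" using closure_contains_Sup by blast
  then obtain x where x: "\<And>n. x n \<in> V" and lim: "x \<longlonglongrightarrow> Sup V"
    unfolding closure_sequential by blast
  text \<open>The unconstrained \<open>\<phi> 0\<close> and \<open>e 0\<close> are reset to \<open>0\<close>, so that every coordinate of the
    maximising sequence is bounded.\<close>
  have "\<forall>n. \<exists>\<tau> \<phi> e. ?F \<tau> \<phi> e \<and> x n = ?O \<tau> \<phi> e \<and> \<phi> 0 = 0 \<and> e 0 = 0"
  proof
    fix n
    obtain \<tau> \<phi> e where "?F \<tau> \<phi> e" "x n = ?O \<tau> \<phi> e" using x[of n] unfolding V_def by blast
    then show "\<exists>\<tau> \<phi> e. ?F \<tau> \<phi> e \<and> x n = ?O \<tau> \<phi> e \<and> \<phi> 0 = 0 \<and> e 0 = 0"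
      by (intro exI[of _ \<tau>] exI[of _ "\<phi>(0 := 0)"] exI[of _ "e(0 := 0)"]) simp
  qed
  then obtain ts ps es
    where "\<forall>n. ?F (ts n) (ps n) (es n) \<and> x n = ?O (ts n) (ps n) (es n) \<and> ps n 0 = 0 \<and> es n 0 = 0"
    by metis
  then have F: "\<And>n. ?F (ts n) (ps n) (es n)" and x_eq: "\<And>n. x n = ?O (ts n) (ps n) (es n)"
    and unused: "\<And>n. ps n 0 = 0 \<and> es n 0 = 0" by blast+
  have f: "\<forall>k\<in>{1..K}. f k > 0" and \<gamma>Bb: "\<forall>k\<in>{1..K}. \<gamma> k > 0 \<and> Bb k > 0" using pos by auto
  obtain r \<tau> \<phi> e where r: "strict_mono r"
    and ts: "\<And>i. i \<le> K \<Longrightarrow> (\<lambda>n. ts (r n) i) \<longlonglongrightarrow> \<tau> i"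
    and ps: "\<And>i. i \<le> K \<Longrightarrow> (\<lambda>n. ps (r n) i) \<longlonglongrightarrow> \<phi> i"
    and es: "\<And>i. i \<le> K \<Longrightarrow> (\<lambda>n. es (r n) i) \<longlonglongrightarrow> e i"
    using feasibleP_convergent_subseq[where ts = ts and ps = ps and es = es, OF F Ip f unused] by blast
  have "Sup V \<le> ?O \<tau> \<phi> e"
  proof (rule objR_limit_ge[OF K W \<gamma>Bb F ts ps es])
    show "(x \<circ> r) n \<le> ?O (ts (r n)) (ps (r n)) (es (r n))" for n using x_eq by simp
    show "(x \<circ> r) \<longlonglongrightarrow> Sup V" using LIMSEQ_subseq_LIMSEQ[OF lim r] .
  qed
  show thesis
  proof (rule that[OF feasibleP_limit[OF F ts ps es]])
    fix \<tau>' \<phi>' e' assume "?F \<tau>' \<phi>' e'"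
    then have "?O \<tau>' \<phi>' e' \<le> Sup V" using bdd unfolding V_def by (intro cSup_upper) auto
    also note \<open>Sup V \<le> ?O \<tau> \<phi> e\<close>
    finally show "?O \<tau>' \<phi>' e' \<le> ?O \<tau> \<phi> e" .
  qed
qed

lemma sum_transfer_first_two:
  fixes \<tau> :: "nat \<Rightarrow> 'a::ab_group_add"
  assumes "1 \<le> m"
  shows "(\<Sum>i=0..m. (\<tau>(0 := a, 1 := \<tau> 1 + \<tau> 0 - a)) i) = (\<Sum>i=0..m. \<tau> i)"
proof -
  have split: "(\<Sum>i=0..m. g i) = g 0 + g 1 + (\<Sum>i=2..m. g i)" for g :: "nat \<Rightarrow> 'a"
    using assms by (simp add: sum.atLeast_Suc_atMost numeral_2_eq_2 add.assoc)
  show ?thesis unfolding split[of \<tau>] split[of "\<tau>(0 := a, 1 := \<tau> 1 + \<tau> 0 - a)"]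
    by (simp add: algebra_simps)
qed

lemma feasibleP_transfer_to_first_slot:
  assumes F: "feasibleP K T \<zeta> Pt Ip h f \<tau> \<phi> e" and K: "K \<ge> 1"
    and a: "0 \<le> a" "a \<le> \<tau> 0" and e1: "e 1 \<le> \<zeta> * Pt * h 1 * a"
  shows "feasibleP K T \<zeta> Pt Ip h f (\<tau>(0 := a, 1 := \<tau> 1 + \<tau> 0 - a)) \<phi> e"
  unfolding feasibleP_def
proof (intro conjI ballI)
  let ?\<tau> = "\<tau>(0 := a, 1 := \<tau> 1 + \<tau> 0 - a)"
  show "(\<Sum>k=0..K. ?\<tau> k) \<le> T" using F K unfolding sum_transfer_first_two[OF K] feasibleP_def by simp
  show "0 \<le> ?\<tau> 0" using a by simp
  fix k assume k: "k \<in> {1..K}"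
  then have Fk: "0 \<le> \<phi> k \<and> \<phi> k \<le> \<tau> k \<and> \<tau> k \<le> T \<and>
      0 \<le> e k \<and> e k \<le> \<zeta> * Pt * h k * (\<Sum>i=0..k-1. \<tau> i) \<and> e k \<le> (Ip / f k) * \<phi> k"
    using F unfolding feasibleP_def by blast
  have "\<tau> 0 + \<tau> 1 \<le> T" using feasibleP_partial_sum_le[OF F K] by simp
  then show "0 \<le> \<phi> k" "\<phi> k \<le> ?\<tau> k" "?\<tau> k \<le> T" "0 \<le> e k" "e k \<le> (Ip / f k) * \<phi> k"
    using Fk k a by auto
  show "e k \<le> \<zeta> * Pt * h k * (\<Sum>i=0..k-1. ?\<tau> i)"
  proof (cases "k = 1")
    case True then show ?thesis using e1 by simp
  next
    case False
    then have "1 \<le> k - 1" using k by auto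
    then have "(\<Sum>i=0..k-1. ?\<tau> i) = (\<Sum>i=0..k-1. \<tau> i)" by (rule sum_transfer_first_two)
    then show ?thesis using Fk by simp
  qed
qed

lemma objR_transfer_to_first_slot:
  assumes "K \<ge> 1" and "a \<le> \<tau> 0" and "Bb 1 \<ge> 0"
  shows "objR K W \<gamma> Bb \<tau> \<phi> e \<le> objR K W \<gamma> Bb (\<tau>(0 := a, 1 := \<tau> 1 + \<tau> 0 - a)) \<phi> e"
  unfolding objR_ge_iff[OF assms(1)]
proof
  fix k assume k: "k \<in> {1..K}"
  have "objR K W \<gamma> Bb \<tau> \<phi> e \<le> node_rate W (\<gamma> k) (Bb k) (\<tau> k) (\<phi> k) (e k)"
    by (rule objR_le_node_rate[OF k])
  also have "\<dots> \<le> node_rate W (\<gamma> k) (Bb k) ((\<tau>(0 := a, 1 := \<tau> 1 + \<tau> 0 - a)) k) (\<phi> k) (e k)"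
    using k assms by (cases "k = 1") (auto intro: node_rate_mono_time)
  finally show "objR K W \<gamma> Bb \<tau> \<phi> e \<le> node_rate W (\<gamma> k) (Bb k) ((\<tau>(0 := a, 1 := \<tau> 1 + \<tau> 0 - a)) k) (\<phi> k) (e k)" .
qed

theorem lemma3:
  fixes K :: nat and T W \<zeta> Pt Ip :: real and h f \<gamma> Bb :: "nat \<Rightarrow> real"
  assumes "K \<ge> 1" and "T > 0" and "W > 0" and "0 < \<zeta>" and "\<zeta> \<le> 1"
    and "Pt > 0" and "Ip > 0"
    and "\<forall>k\<in>{1..K}. h k > 0 \<and> f k > 0 \<and> \<gamma> k > 0 \<and> Bb k > 0"
  shows "\<exists>\<tau> \<phi> e. feasibleP K T \<zeta> Pt Ip h f \<tau> \<phi> e \<and>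
           (\<forall>\<tau>' \<phi>' e'. feasibleP K T \<zeta> Pt Ip h f \<tau>' \<phi>' e' \<longrightarrow>
               objR K W \<gamma> Bb \<tau>' \<phi>' e' \<le> objR K W \<gamma> Bb \<tau> \<phi> e) \<and>
           e 1 = \<zeta> * Pt * h 1 * \<tau> 0"
proof -
  have pos: "\<forall>k\<in>{1..K}. f k > 0 \<and> \<gamma> k > 0 \<and> Bb k > 0" using assms(8) by blast
  obtain \<tau> \<phi> e where F: "feasibleP K T \<zeta> Pt Ip h f \<tau> \<phi> e"
    and opt: "\<And>\<tau>' \<phi>' e'. feasibleP K T \<zeta> Pt Ip h f \<tau>' \<phi>' e' \<Longrightarrow>
               objR K W \<gamma> Bb \<tau>' \<phi>' e' \<le> objR K W \<gamma> Bb \<tau> \<phi> e"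
    using feasibleP_attains_max[OF assms(1,2,3,7) pos] by blast
  have one: "(1::nat) \<in> {1..K}" using assms(1) by simp
  define c where "c = \<zeta> * Pt * h 1"
  have c: "c > 0" and Bb1: "Bb 1 > 0" using assms one unfolding c_def by auto
  have "0 \<le> e 1 \<and> e 1 \<le> c * (\<Sum>i=0..1-1. \<tau> i)" using F one unfolding feasibleP_def c_def by blast
  then have e1: "0 \<le> e 1" "e 1 \<le> c * \<tau> 0" by simp_all
  define a where "a = e 1 / c"
  have a: "0 \<le> a" "a \<le> \<tau> 0" and e1_eq: "e 1 = c * a"
    using e1 c unfolding a_def by (auto simp: field_simps)
  let ?\<tau> = "\<tau>(0 := a, 1 := \<tau> 1 + \<tau> 0 - a)"
  have "feasibleP K T \<zeta> Pt Ip h f ?\<tau> \<phi> e"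
    using feasibleP_transfer_to_first_slot[OF F assms(1) a] e1_eq unfolding c_def by simp
  moreover have "objR K W \<gamma> Bb \<tau> \<phi> e \<le> objR K W \<gamma> Bb ?\<tau> \<phi> e"
    using Bb1 by (intro objR_transfer_to_first_slot[where \<tau> = \<tau>, OF assms(1) a(2)]) simp
  ultimately show ?thesis using opt e1_eq unfolding c_def by (intro exI[of _ ?\<tau>] exI[of _ \<phi>] exI[of _ e]) (auto intro: order_trans)
qed

end
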